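(* Let $\boldsymbol\Phi$ be the symmetric adjacency matrix of a connected undirected graph $G=(V,\mathcal E)$ on $n$ nodes with nonnegative edge weights and no self-loops, with degree matrix $\mathbf D$ and Laplacian $\mathbf L=\mathbf D-\boldsymbol\Phi$. Consider the natural random walk on $G$, i.e. the Markov chain with transition matrix $\mathbf P=\mathbf D^{-1}\boldsymbol\Phi$. Then there exists an oriented edge-incidence matrix $\mathbf F$ of $G$ such that for every edge $(j,k)\in\mathcal E$, $$\mathbf F^\dagger_{\mathcal E(j,k)\cdot}=\sqrt{\Phi_{jk}}\,(\mathbf L^\dagger_{\cdot j}-\mathbf L^\dagger_{\cdot k})=\frac{\sqrt{\Phi_{jk}}}{2\operatorname{vol}(G)}\Big(\mathbf I_n-\frac{\mathbf 1_n\mathbf 1_n^\top}{n}\Big)(\mathbf C_{\cdot k}-\mathbf C_{\cdot j}),$$ where $\operatorname{vol}(G)=\operatorname{trace}(\mathbf D)$ and $\mathbf C\in\mathbb R^{n\times n}_{\ge0}$ is the matrix of commute times, $C_{ij}=H_{ij}+H_{ji}$, with $H_{ij}$ the expected time for the random walk started at node $i$ to reach node $j$.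
   Context: An oriented edge-incidence matrix $\mathbf F\in\mathbb R^{n\times|\mathcal E|}$ has, for each edge between nodes $j$ and $k$ with column index $\mathcal E(j,k)$, exactly two nonzero entries $\mathbf F_{j,\mathcal E(j,k)}=-\mathbf F_{k,\mathcal E(j,k)}=\sqrt{\Phi_{jk}}$. $\mathbf F^\dagger$ and $\mathbf L^\dagger$ denote Moore–Penrose pseudoinverses; $\mathbf F^\dagger_{\mathcal E(j,k)\cdot}$ is the row of $\mathbf F^\dagger\in\mathbb R^{|\mathcal E|\times n}$ indexed by edge $\mathcal E(j,k)$, viewed as a vector in $\mathbb R^n$. $D_{ii}=\sum_j\Phi_{ij}$. *)

theory Defs
  imports "HOL-Analysis.Analysis"
begin

definition is_pinv :: "real^'c^'r \<Rightarrow> real^'r^'c \<Rightarrow> bool" where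
  "is_pinv A X \<longleftrightarrow> A ** X ** A = A \<and> X ** A ** X = X \<and>
     transpose (A ** X) = A ** X \<and> transpose (X ** A) = X ** A"

definition pinv :: "real^'c^'r \<Rightarrow> real^'r^'c" where
  "pinv A = (THE X. is_pinv A X)"

text \<open>Weighted graph given by a symmetric nonnegative adjacency matrix without self-loops;
  j and k are adjacent iff the weight is positive.\<close>
definition weighted_graph :: "real^'n^'n \<Rightarrow> bool" where
  "weighted_graph Phi \<longleftrightarrow> transpose Phi = Phi \<and> (\<forall>i j. Phi$i$j \<ge> 0) \<and> (\<forall>i. Phi$i$i = 0)"

definition connected_graph :: "real^'n^'n \<Rightarrow> bool" where
  "connected_graph Phi \<longleftrightarrow> (\<forall>j k. (j, k) \<in> {(a, b). Phi$a$b > 0}\<^sup>*)"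

definition degree_matrix :: "real^'n^'n \<Rightarrow> real^'n^'n" where
  "degree_matrix Phi = (\<chi> i j. if i = j then (\<Sum>l\<in>UNIV. Phi$i$l) else 0)"

definition laplacian :: "real^'n^'n \<Rightarrow> real^'n^'n" where
  "laplacian Phi = degree_matrix Phi - Phi"

definition vol :: "real^'n^'n \<Rightarrow> real" where
  "vol Phi = trace (degree_matrix Phi)"

definition transition_matrix :: "real^'n^'n \<Rightarrow> real^'n^'n" where
  "transition_matrix Phi = matrix_inv (degree_matrix Phi) ** Phi"

text \<open>Probability that the chain with transition matrix P started at i first hits j
  exactly at time t (sum over trajectories x_0 = i, ..., x_t = j avoiding j before t).\<close>
definition first_hit_prob :: "real^'n^'n \<Rightarrow> 'n \<Rightarrow> 'n \<Rightarrow> nat \<Rightarrow> real" where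
  "first_hit_prob P i j t =
     (\<Sum>xs\<in>{xs::'n list. length xs = Suc t \<and> xs ! 0 = i \<and> xs ! t = j \<and> (\<forall>s<t. xs ! s \<noteq> j)}.
        \<Prod>s<t. P $ (xs ! s) $ (xs ! Suc s))"

definition hitting_time :: "real^'n^'n \<Rightarrow> 'n \<Rightarrow> 'n \<Rightarrow> real" where
  "hitting_time P i j = (\<Sum>t. real t * first_hit_prob P i j t)"

definition commute_time_matrix :: "real^'n^'n \<Rightarrow> real^'n^'n" where
  "commute_time_matrix Phi =
     (let P = transition_matrix Phi in (\<chi> i j. hitting_time P i j + hitting_time P j i))"

text \<open>An enumeration of the edges by the index type 'e, each undirected edge
  {j,k} appearing exactly once, with a chosen orientation (j,k).\<close>
definition edge_orientation :: "real^'n^'n \<Rightarrow> ('e \<Rightarrow> 'n \<times> 'n) \<Rightarrow> bool" where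
  "edge_orientation Phi \<epsilon> \<longleftrightarrow> inj \<epsilon> \<and>
     (\<forall>e. Phi $ fst (\<epsilon> e) $ snd (\<epsilon> e) > 0) \<and>
     (\<forall>j k. Phi$j$k > 0 \<longrightarrow> (j, k) \<in> range \<epsilon> \<or> (k, j) \<in> range \<epsilon>) \<and>
     (\<forall>j k. (j, k) \<in> range \<epsilon> \<longrightarrow> (k, j) \<notin> range \<epsilon>)"

definition incidence_matrix :: "real^'n^'n \<Rightarrow> ('e \<Rightarrow> 'n \<times> 'n) \<Rightarrow> real^'e^'n" where
  "incidence_matrix Phi \<epsilon> = (\<chi> i e. (case \<epsilon> e of (j, k) \<Rightarrow>
      if i = j then sqrt (Phi$j$k) else if i = k then - sqrt (Phi$j$k) else 0))"

end

theory Submission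
  imports Defs
begin

text \<open>Let G = L^+ and J = 1 1^T / n. Connectivity makes ker L the constants, so L + J is
  invertible and G = (L + J)^-1 - J. Any orientation of the edges gives F F^T = L, hence
  F^+ = F^T G, whose row for the edge (j, k) is sqrt Phi_jk (G e_j - G e_k).
  The hitting times of the random walk are the unique solution of the first-step equations
  H_jj = 0, H_ij = 1 + sum_l P_il H_lj (unique because the probability of not having reached j
  decays geometrically); the vector h = G (d - vol e_j) solves them after shifting h_j to 0,
  so H_ij = h_i - h_j and C_ij = vol (G_ii + G_jj - 2 G_ij). Centering a difference of two
  columns of C removes its constant part and leaves 2 vol (G e_j - G e_k).\<close>

section \<open>Moore-Penrose pseudoinverses\<close>

lemma matrix_sub_ldistrib: "(A::'a::ring_1^'n^'m) ** (B - C) = A ** B - A ** C"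
  by (simp add: matrix_matrix_mult_def vec_eq_iff sum_subtractf algebra_simps)

lemma matrix_add_rdistrib: "((A::'a::semiring_1^'n^'m) + B) ** C = A ** C + B ** C"
  by (simp add: matrix_matrix_mult_def vec_eq_iff sum.distrib algebra_simps)

lemma matrix_sub_rdistrib: "((A::'a::ring_1^'n^'m) - B) ** C = A ** C - B ** C"
  by (simp add: matrix_matrix_mult_def vec_eq_iff sum_subtractf algebra_simps)

lemma transpose_diff: "transpose (A - B) = transpose A - transpose (B::'a::minus^'n^'m)"
  by (simp add: transpose_def vec_eq_iff)

lemma transpose_mult_nth: "(transpose A ** B) $ e = transpose B *v column e (A::real^'e^'n)"
  by (simp add: vec_eq_iff matrix_matrix_mult_def matrix_vector_mult_def transpose_def column_def
      mult.commute)

lemma matrix_inv_eqI: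
  fixes A B :: "'a::field^'n^'n"
  assumes "A ** B = mat 1"
  shows "matrix_inv A = B"
proof -
  have BA: "B ** A = mat 1" using assms matrix_left_right_inverse by blast
  have "A ** matrix_inv A = mat 1 \<and> matrix_inv A ** A = mat 1"
    unfolding matrix_inv_def by (rule someI[of _ B]) (use assms BA in blast)
  then have "matrix_inv A ** A = mat 1" by blast
  then show ?thesis by (metis assms matrix_mul_assoc matrix_mul_lid matrix_mul_rid)
qed

lemma matrix_inv_left:
  fixes A :: "'a::field^'n^'n"
  assumes "invertible A"
  shows "matrix_inv A ** A = mat 1"
  using assms matrix_inv_eqI matrix_left_right_inverse unfolding invertible_def by metis

lemma matrix_inv_right:
  fixes A :: "'a::field^'n^'n"
  assumes "invertible A"
  shows "A ** matrix_inv A = mat 1"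
  using assms matrix_inv_eqI unfolding invertible_def by metis

lemma matrix_mul_transpose_self_eq_0:
  fixes X :: "real^'n^'m"
  assumes "X ** transpose X = 0"
  shows "X = 0"
proof -
  have "row i X \<bullet> row i X = 0" for i
    using arg_cong[OF assms, of "\<lambda>M. M $ i $ i"] by (simp add: matrix_mult_transpose_dot_row)
  then show ?thesis by (simp add: vec_eq_iff row_def)
qed

lemma is_pinv_unique:
  assumes "is_pinv A X" "is_pinv A Y"
  shows "X = Y"
proof -
  have a: "A ** X ** A = A" "X ** A ** X = X" "transpose (A ** X) = A ** X" "transpose (X ** A) = X ** A"
    using assms(1) unfolding is_pinv_def by auto
  have b: "A ** Y ** A = A" "Y ** A ** Y = Y" "transpose (A ** Y) = A ** Y" "transpose (Y ** A) = Y ** A"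
    using assms(2) unfolding is_pinv_def by auto
  have "X = X ** transpose (A ** X)" using a(2,3) by (simp add: matrix_mul_assoc)
  also have "\<dots> = X ** transpose (A ** X) ** transpose (A ** Y)"
    using b(1) by (metis matrix_mul_assoc matrix_transpose_mul)
  also have "\<dots> = X ** (A ** X) ** (A ** Y)" using a(3) b(3) by (simp add: matrix_mul_assoc)
  also have "\<dots> = X ** A ** Y" using a(2) by (metis matrix_mul_assoc)
  finally have X: "X = X ** A ** Y" .
  have "Y = transpose (Y ** A) ** Y" using b(2,4) by simp
  also have "\<dots> = transpose (X ** A) ** transpose (Y ** A) ** Y"
    using a(1) by (metis matrix_mul_assoc matrix_transpose_mul)
  also have "\<dots> = X ** A ** (Y ** A ** Y)" using a(4) b(4) by (simp add: matrix_mul_assoc)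
  also have "\<dots> = X ** A ** Y" using b(2) by simp
  finally show ?thesis using X by simp
qed

lemma pinv_eqI: "is_pinv A X \<Longrightarrow> pinv A = X"
  unfolding pinv_def using is_pinv_unique by blast

lemma is_pinv_transpose: "is_pinv A X \<Longrightarrow> is_pinv (transpose A) (transpose X)"
  unfolding is_pinv_def by (metis matrix_transpose_mul transpose_transpose matrix_mul_assoc)

lemma is_pinv_symmetric:
  assumes "is_pinv A X" "transpose A = A"
  shows "transpose X = X"
  using is_pinv_unique[OF is_pinv_transpose[OF assms(1)]] assms by simp

text \<open>The only nontrivial Penrose condition is F F^T G F = F: the residual
  R = F - F F^T G F satisfies R R^T = 0.\<close>
lemma is_pinv_factor:
  fixes F :: "real^'e^'n"
  assumes G: "is_pinv (F ** transpose F) G"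
  shows "is_pinv F (transpose F ** G)"
proof -
  let ?L = "F ** transpose F"
  have LGL: "?L ** G ** ?L = ?L" and GLG: "G ** ?L ** G = G"
    and LG: "transpose (?L ** G) = ?L ** G"
    using G unfolding is_pinv_def by auto
  have Gsym: "transpose G = G"
    using is_pinv_symmetric[OF G] by (simp add: matrix_transpose_mul)
  define R where "R = F - ?L ** G ** F"
  have "R ** transpose R = (F - ?L ** G ** F) ** (transpose F - transpose F ** (G ** ?L))"
    unfolding R_def by (simp add: transpose_diff matrix_transpose_mul Gsym matrix_mul_assoc)
  also have "\<dots> = 0"
    using LGL by (simp add: matrix_sub_ldistrib matrix_sub_rdistrib matrix_mul_assoc)
  finally have FGF: "?L ** G ** F = F"
    using matrix_mul_transpose_self_eq_0[of R] by (simp add: R_def)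
  have "transpose F ** G ** F ** (transpose F ** G) = transpose F ** (G ** ?L ** G)"
    by (simp add: matrix_mul_assoc)
  then have XFX: "transpose F ** G ** F ** (transpose F ** G) = transpose F ** G"
    using GLG by simp
  have "transpose (transpose F ** G ** F) = transpose F ** G ** F"
    using Gsym by (simp add: matrix_mul_assoc matrix_transpose_mul)
  then show ?thesis
    unfolding is_pinv_def using FGF XFX LG by (simp add: matrix_mul_assoc)
qed

lemma is_pinv_matrix_inv_add_projection:
  fixes L J :: "real^'n^'n"
  assumes JJ: "J ** J = J" and Jsym: "transpose J = J"
    and LJ: "L ** J = 0" and JL: "J ** L = 0" and inv: "invertible (L + J)"
  defines "G \<equiv> matrix_inv (L + J) - J"
  shows "is_pinv L G" and "L ** G = mat 1 - J" and "J ** G = 0"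
proof -
  define Mi where "Mi = matrix_inv (L + J)"
  have MMi: "(L + J) ** Mi = mat 1" and MiM: "Mi ** (L + J) = mat 1"
    unfolding Mi_def using inv by (simp_all add: matrix_inv_left matrix_inv_right)
  have "(L + J) ** J = J" and "J ** (L + J) = J"
    by (simp_all add: matrix_add_rdistrib matrix_add_ldistrib LJ JL JJ)
  then have MiJ: "Mi ** J = J" and JMi: "J ** Mi = J"
    by (metis MiM matrix_mul_assoc matrix_mul_lid, metis MMi matrix_mul_assoc matrix_mul_rid)
  have LMi: "L ** Mi = mat 1 - J"
    using MMi JMi by (simp add: matrix_add_rdistrib eq_diff_eq)
  have MiL: "Mi ** L = mat 1 - J"
    using MiM MiJ by (simp add: matrix_add_ldistrib eq_diff_eq)
  show LG: "L ** G = mat 1 - J"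
    unfolding G_def Mi_def[symmetric] by (simp add: matrix_sub_ldistrib LMi LJ)
  have GL: "G ** L = mat 1 - J"
    unfolding G_def Mi_def[symmetric] by (simp add: matrix_sub_rdistrib MiL JL)
  show JG: "J ** G = 0"
    unfolding G_def Mi_def[symmetric] by (simp add: matrix_sub_ldistrib JMi JJ)
  have "L ** G ** L = L" by (simp add: LG matrix_sub_rdistrib JL)
  moreover have "G ** L ** G = G" by (simp add: GL matrix_sub_rdistrib JG)
  ultimately show "is_pinv L G"
    unfolding is_pinv_def by (simp add: LG GL transpose_diff Jsym)
qed

section \<open>Hitting times of irreducible Markov chains\<close>

lemma first_hit_prob_0:
  fixes P :: "real^'n^'n"
  shows "first_hit_prob P i j 0 = (if i = j then 1 else 0)"
proof -
  have "{xs::'n list. length xs = Suc 0 \<and> xs ! 0 = i \<and> xs ! 0 = j \<and> (\<forall>s<0. xs ! s \<noteq> j)}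
        = (if i = j then {[i]} else {})"
    by (auto simp: length_Suc_conv)
  then show ?thesis unfolding first_hit_prob_def by simp
qed

lemma first_hit_prob_Suc:
  fixes P :: "real^'n^'n"
  shows "first_hit_prob P i j (Suc t) =
    (if i = j then 0 else (\<Sum>l\<in>UNIV. P$i$l * first_hit_prob P l j t))"
proof (cases "i = j")
  case True
  then have "{xs. length xs = Suc (Suc t) \<and> xs ! 0 = i \<and> xs ! Suc t = j \<and> (\<forall>s<Suc t. xs ! s \<noteq> j)} = {}"
    by auto
  then show ?thesis using True unfolding first_hit_prob_def by (simp only: sum.empty) simp
next
  case False
  define paths where
    "paths = {ys::'n list. length ys = Suc t \<and> ys ! t = j \<and> (\<forall>s<t. ys ! s \<noteq> j)}"
  define weight where "weight ys = (\<Prod>s<t. P $ (ys ! s) $ (ys ! Suc s))" for ys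
  have "finite paths"
    by (rule finite_subset[OF _ finite_lists_length_eq[of UNIV "Suc t"]]) (auto simp: paths_def)
  let ?hit = "{xs. length xs = Suc (Suc t) \<and> xs ! 0 = i \<and> xs ! Suc t = j \<and> (\<forall>s<Suc t. xs ! s \<noteq> j)}"
  have "?hit = (#) i ` paths"
  proof (intro set_eqI iffI)
    fix xs assume "xs \<in> ?hit"
    then obtain ys where "xs = i # ys" "ys \<in> paths"
      unfolding paths_def by (cases xs) fastforce+
    then show "xs \<in> (#) i ` paths" by blast
  next
    fix xs assume "xs \<in> (#) i ` paths"
    then show "xs \<in> ?hit"
      unfolding paths_def using False by (auto simp: less_Suc_eq_0_disj)
  qed
  then have "first_hit_prob P i j (Suc t) = (\<Sum>ys\<in>paths. P $ i $ (ys ! 0) * weight ys)"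
    unfolding first_hit_prob_def weight_def
    by (simp add: sum.reindex prod.lessThan_Suc_shift del: prod.lessThan_Suc)
  also have "\<dots> = (\<Sum>l\<in>UNIV. \<Sum>ys\<in>{ys\<in>paths. ys ! 0 = l}. P $ i $ (ys ! 0) * weight ys)"
    by (rule sum.group[symmetric]) (use \<open>finite paths\<close> in auto)
  also have "\<dots> = (\<Sum>l\<in>UNIV. P$i$l * first_hit_prob P l j t)"
    unfolding first_hit_prob_def weight_def paths_def
    by (auto simp: sum_distrib_left intro!: sum.cong arg_cong[where f="sum _"])
  finally show ?thesis using False by simp
qed

lemma summable_power_div:
  fixes q :: real
  assumes "0 \<le> q" "q < 1" "0 < N"
  shows "summable (\<lambda>t. q ^ (t div N))"
proof (rule summableI_nonneg_bounded)
  fix m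
  have block: "(\<Sum>t\<in>{k * N..<k * N + N}. q ^ (t div N)) = real N * q ^ k" for k
  proof -
    have "t div N = k" if "t \<in> {k * N..<k * N + N}" for t
      using that \<open>0 < N\<close> by (auto intro: div_nat_eqI simp: mult.commute)
    then show ?thesis by simp
  qed
  have "(\<Sum>t<m. q ^ (t div N)) \<le> (\<Sum>t<m * N. q ^ (t div N))"
    using assms by (intro sum_mono2) (auto simp: Suc_le_eq)
  also have "\<dots> = real N * (\<Sum>k<m. q ^ k)"
    by (simp add: sum.nat_group[symmetric] block sum_distrib_left)
  also have "\<dots> \<le> real N * (1 / (1 - q))"
    using assms by (intro mult_left_mono) (simp_all add: sum_gp_strict divide_right_mono)
  finally show "(\<Sum>t<m. q ^ (t div N)) \<le> real N * (1 / (1 - q))" .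
qed (use assms in simp)

locale stochastic_matrix =
  fixes P :: "real^'n^'n"
  assumes nonneg: "P$i$l \<ge> 0" and row_sum: "(\<Sum>l\<in>UNIV. P$i$l) = 1"
begin

text \<open>One step of the chain killed on hitting j; survival j t i is the probability that the
  chain started at i has not visited j at times 0, ..., t.\<close>
definition killed_step :: "'n \<Rightarrow> ('n \<Rightarrow> real) \<Rightarrow> 'n \<Rightarrow> real" where
  "killed_step j v i = (if i = j then 0 else (\<Sum>l\<in>UNIV. P$i$l * v l))"

definition survival :: "'n \<Rightarrow> nat \<Rightarrow> 'n \<Rightarrow> real" where
  "survival j t = (killed_step j ^^ t) (\<lambda>i. if i = j then 0 else 1)"

lemma survival_0: "survival j 0 i = (if i = j then 0 else 1)"
  by (simp add: survival_def)

lemma survival_Suc: "survival j (Suc t) = killed_step j (survival j t)"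
  by (simp add: survival_def)

lemma killed_step_mono: "(\<And>l. v l \<le> w l) \<Longrightarrow> killed_step j v i \<le> killed_step j w i"
  unfolding killed_step_def by (auto intro!: sum_mono mult_left_mono nonneg)

lemma killed_step_nonneg: "(\<And>l. 0 \<le> v l) \<Longrightarrow> 0 \<le> killed_step j v i"
  unfolding killed_step_def by (auto intro!: sum_nonneg mult_nonneg_nonneg nonneg)

lemma killed_step_le_1: "(\<And>l. v l \<le> 1) \<Longrightarrow> killed_step j v i \<le> 1"
  using killed_step_mono[of v "\<lambda>_. 1" j i] by (auto simp: killed_step_def row_sum)

lemma killed_step_scale: "killed_step j (\<lambda>l. c * v l) i = c * killed_step j v i"
  unfolding killed_step_def by (simp add: sum_distrib_left algebra_simps)

lemma killed_step_diff: "killed_step j (\<lambda>l. v l - w l) i = killed_step j v i - killed_step j w i"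
  unfolding killed_step_def by (simp add: sum_subtractf algebra_simps)

lemma abs_killed_step_le: "\<bar>killed_step j v i\<bar> \<le> killed_step j (\<lambda>l. \<bar>v l\<bar>) i"
  unfolding killed_step_def
  by (auto intro: order.trans[OF sum_abs] simp: abs_mult nonneg)

lemma survival_target: "survival j t j = 0"
  by (cases t) (simp_all add: survival_0 survival_Suc killed_step_def)

lemma survival_nonneg: "0 \<le> survival j t i"
  by (induction t arbitrary: i) (auto simp: survival_0 survival_Suc intro: killed_step_nonneg)

lemma survival_le_1: "survival j t i \<le> 1"
  by (induction t arbitrary: i) (auto simp: survival_0 survival_Suc intro: killed_step_le_1)

lemma survival_Suc_le: "survival j (Suc t) i \<le> survival j t i"
proof (induction t arbitrary: i)
  case 0
  show ?case using survival_le_1[of j 1 i] survival_target[of j 1] by (auto simp: survival_0)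
next
  case (Suc t)
  then show ?case by (simp only: survival_Suc[of j "Suc t"] survival_Suc[of j t] killed_step_mono)
qed

lemma survival_antimono: "t \<le> t' \<Longrightarrow> survival j t' i \<le> survival j t i"
  using lift_Suc_antimono_le[of "\<lambda>t. survival j t i"] survival_Suc_le by blast

lemma first_hit_prob_Suc_eq_survival_diff:
  "first_hit_prob P i j (Suc t) = survival j t i - survival j (Suc t) i"
proof (induction t arbitrary: i)
  case 0
  have "(\<Sum>l\<in>UNIV. P$i$l * (if l = j then 1 else 0)) = P$i$j"
    by (simp add: if_distrib[of "\<lambda>x. _ * x"] cong: if_cong)
  moreover have "(\<Sum>l\<in>UNIV. P$i$l * (if l = j then 0 else 1)) = (\<Sum>l\<in>UNIV. P$i$l) - P$i$j"
    by (simp add: if_distrib[of "\<lambda>x. _ * x"] sum.If_cases Diff_eq[symmetric] sum_diff1)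
  ultimately show ?case
    by (simp add: first_hit_prob_Suc first_hit_prob_0 survival_0 survival_Suc killed_step_def row_sum)
next
  case (Suc t)
  have "first_hit_prob P i j (Suc (Suc t)) = killed_step j (\<lambda>l. survival j t l - survival j (Suc t) l) i"
    by (simp add: first_hit_prob_Suc[of _ i j "Suc t"] Suc killed_step_def)
  then show ?case
    by (simp only: killed_step_diff survival_Suc)
qed

lemma first_hit_prob_nonneg: "first_hit_prob P i j t \<ge> 0"
  by (cases t) (simp_all add: first_hit_prob_0 first_hit_prob_Suc_eq_survival_diff survival_Suc_le)

lemma abs_killed_step_power_le:
  assumes "\<And>l. \<bar>v l\<bar> \<le> B * survival j 0 l"
  shows "\<bar>(killed_step j ^^ t) v i\<bar> \<le> B * survival j t i"
proof (induction t arbitrary: i)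
  case 0 then show ?case using assms by simp
next
  case (Suc t)
  have "\<bar>(killed_step j ^^ Suc t) v i\<bar> \<le> killed_step j (\<lambda>l. \<bar>(killed_step j ^^ t) v l\<bar>) i"
    by (simp add: abs_killed_step_le)
  also have "\<dots> \<le> killed_step j (\<lambda>l. B * survival j t l) i"
    by (rule killed_step_mono) (rule Suc)
  also have "\<dots> = B * survival j (Suc t) i" by (simp add: killed_step_scale survival_Suc)
  finally show ?case .
qed

end

locale irreducible_chain = stochastic_matrix +
  assumes irreducible: "(i, j) \<in> {(a, b). P$a$b > 0}\<^sup>*"
begin

lemma survival_eventually_lt_1: "\<exists>d. survival j d i < 1"
  using irreducible[of i j]
proof (induction rule: converse_rtrancl_induct)
  case base
  show ?case by (rule exI[of _ 0]) (simp add: survival_0)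
next
  case (step y z)
  then obtain d where d: "survival j d z < 1" by blast
  show ?case
  proof (cases "y = j")
    case True then show ?thesis by (intro exI[of _ 0]) (simp add: survival_0)
  next
    case False
    have "P$y$z > 0" using step(1) by simp
    have "survival j (Suc d) y = (\<Sum>l\<in>UNIV. P$y$l * survival j d l)"
      using False by (simp add: survival_Suc killed_step_def)
    also have "\<dots> < (\<Sum>l\<in>UNIV. P$y$l)"
    proof (rule sum_strict_mono_ex1)
      show "\<forall>l\<in>UNIV. P$y$l * survival j d l \<le> P$y$l"
        using survival_le_1 nonneg by (simp add: mult_left_le)
      show "\<exists>l\<in>UNIV. P$y$l * survival j d l < P$y$l"
        using d \<open>P$y$z > 0\<close> by (intro bexI[of _ z]) simp_all
    qed simp
    finally show ?thesis by (intro exI[of _ "Suc d"]) (simp add: row_sum)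
  qed
qed

lemma survival_block_le:
  assumes "\<And>l. survival j t l \<le> B" "\<And>l. survival j N l \<le> q"
  shows "survival j (N + t) i \<le> q * B"
proof -
  have "\<bar>survival j t l\<bar> \<le> B * survival j 0 l" for l
    using assms(1)[of l] survival_nonneg[of j t l] survival_target[of j t]
    by (cases "l = j") (auto simp: survival_0)
  then have "\<bar>(killed_step j ^^ N) (survival j t) i\<bar> \<le> B * survival j N i"
    by (rule abs_killed_step_power_le)
  moreover have "(killed_step j ^^ N) (survival j t) = survival j (N + t)"
    by (simp add: survival_def funpow_add)
  moreover have "B * survival j N i \<le> B * q"
    using assms(1)[of j] assms(2)[of i] survival_target[of j t] by (simp add: mult_left_mono)
  ultimately show ?thesis by (simp add: mult.commute)
qed

lemma survival_geometric_decay: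
  obtains N q where "0 < N" "0 \<le> q" "q < 1" "\<And>t i. survival j t i \<le> q ^ (t div N)"
proof -
  obtain d where d: "\<And>i. survival j (d i) i < 1"
    using survival_eventually_lt_1 by metis
  define N where "N = Suc (Max (range d))"
  define q where "q = Max (range (survival j N))"
  have "survival j N i < 1" for i
  proof -
    have "d i \<le> N" unfolding N_def by (simp add: le_SucI)
    then show ?thesis using d[of i] by (rule order.strict_trans1[OF survival_antimono])
  qed
  then have "q < 1" unfolding q_def by (simp add: Max_less_iff)
  have q: "survival j N i \<le> q" for i unfolding q_def by simp
  have "0 \<le> q" using q[of j] survival_nonneg[of j N j] by simp
  have pow: "survival j (k * N) i \<le> q ^ k" for k i
  proof (induction k arbitrary: i)
    case 0 then show ?case by (simp add: survival_le_1)
  next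
    case (Suc k)
    have "survival j (N + k * N) i \<le> q * q ^ k"
      by (rule survival_block_le) (use Suc q in auto)
    then show ?case by (simp add: add.commute)
  qed
  have "survival j t i \<le> q ^ (t div N)" for t i
    using survival_antimono[of "t div N * N" t j i] pow[of "t div N" i] by simp
  moreover have "0 < N" by (simp add: N_def)
  ultimately show ?thesis using that \<open>0 \<le> q\<close> \<open>q < 1\<close> by blast
qed

lemma summable_survival: "summable (\<lambda>t. survival j t i)"
proof -
  obtain N q where "0 < N" "0 \<le> q" "q < 1" "\<And>t. survival j t i \<le> q ^ (t div N)"
    using survival_geometric_decay by metis
  then show ?thesis
    by (intro summable_comparison_test'[OF summable_power_div[of q N]]) (auto simp: survival_nonneg)
qed

lemma sum_time_first_hit_prob:
  "(\<Sum>t<Suc m. real t * first_hit_prob P i j t)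
    = (\<Sum>s<m. survival j s i) - real m * survival j m i"
  by (induction m) (simp_all add: first_hit_prob_Suc_eq_survival_diff algebra_simps)

lemma hitting_time_sums: "(\<lambda>t. real t * first_hit_prob P i j t) sums hitting_time P i j"
  unfolding hitting_time_def
proof (intro summable_sums summableI_nonneg_bounded)
  show "0 \<le> real t * first_hit_prob P i j t" for t by (simp add: first_hit_prob_nonneg)
  fix n
  have "(\<Sum>t<n. real t * first_hit_prob P i j t) \<le> (\<Sum>t<Suc n. real t * first_hit_prob P i j t)"
    by (simp add: first_hit_prob_nonneg)
  also have "\<dots> \<le> (\<Sum>s<n. survival j s i)"
    unfolding sum_time_first_hit_prob using survival_nonneg[of j n i] by simp
  also have "\<dots> \<le> (\<Sum>s. survival j s i)"
    by (intro sum_le_suminf summable_survival) (simp_all add: survival_nonneg)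
  finally show "(\<Sum>t<n. real t * first_hit_prob P i j t) \<le> (\<Sum>s. survival j s i)" .
qed

lemma first_hit_prob_sums: "(\<lambda>t. first_hit_prob P i j t) sums 1"
proof -
  have "(\<lambda>t. survival j t i) \<longlonglongrightarrow> 0"
    by (rule summable_LIMSEQ_zero[OF summable_survival])
  then have "(\<lambda>t. first_hit_prob P i j (Suc t)) sums survival j 0 i"
    using telescope_sums'[of "\<lambda>t. survival j t i" 0] by (simp add: first_hit_prob_Suc_eq_survival_diff)
  then have "first_hit_prob P i j sums (survival j 0 i + first_hit_prob P i j 0)"
    by (simp only: sums_Suc_iff)
  then show ?thesis by (cases "i = j") (simp_all add: survival_0 first_hit_prob_0)
qed

lemma hitting_time_target: "hitting_time P j j = 0"
proof -
  have "real t * first_hit_prob P j j t = 0" for t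
    by (cases t) (simp_all add: first_hit_prob_Suc)
  then show ?thesis unfolding hitting_time_def by (simp only: suminf_zero)
qed

lemma hitting_time_step:
  assumes "i \<noteq> j"
  shows "hitting_time P i j = 1 + (\<Sum>l\<in>UNIV. P$i$l * hitting_time P l j)"
proof -
  have "(\<lambda>t. \<Sum>l\<in>UNIV. P$i$l * (real t * first_hit_prob P l j t + first_hit_prob P l j t))
      sums (\<Sum>l\<in>UNIV. P$i$l * (hitting_time P l j + 1))"
    by (intro sums_sum sums_mult sums_add hitting_time_sums first_hit_prob_sums)
  moreover have "(\<Sum>l\<in>UNIV. P$i$l * (real t * first_hit_prob P l j t + first_hit_prob P l j t))
      = real (Suc t) * first_hit_prob P i j (Suc t)" for t
    using assms by (simp add: first_hit_prob_Suc sum_distrib_left algebra_simps)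
  ultimately have "(\<lambda>t. real (Suc t) * first_hit_prob P i j (Suc t))
      sums (\<Sum>l\<in>UNIV. P$i$l * (hitting_time P l j + 1))"
    by simp
  then have "(\<lambda>t. real t * first_hit_prob P i j t) sums (\<Sum>l\<in>UNIV. P$i$l * (hitting_time P l j + 1))"
    using sums_Suc_iff[of "\<lambda>t. real t * first_hit_prob P i j t"] by simp
  then have "hitting_time P i j = (\<Sum>l\<in>UNIV. P$i$l * (hitting_time P l j + 1))"
    using sums_unique2[OF hitting_time_sums] by blast
  then show ?thesis by (simp add: distrib_left sum.distrib row_sum)
qed

text \<open>A function that is harmonic off j and vanishes at j is a fixed point of the killed
  step, hence dominated by a multiple of the survival probabilities, which tend to 0.\<close>
lemma harmonic_off_target_eq_0:
  assumes "d j = 0" and "\<And>i. i \<noteq> j \<Longrightarrow> d i = (\<Sum>l\<in>UNIV. P$i$l * d l)"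
  shows "d i = 0"
proof -
  have "killed_step j d = d"
    using assms by (auto simp: killed_step_def)
  then have fixpoint: "(killed_step j ^^ t) d = d" for t
    by (induction t) simp_all
  define B where "B = Max (range (\<lambda>l. \<bar>d l\<bar>))"
  have "\<bar>d l\<bar> \<le> B * survival j 0 l" for l
    using assms(1) by (cases "l = j") (simp_all add: B_def survival_0)
  then have le: "\<bar>d i\<bar> \<le> B * survival j t i" for t
    using abs_killed_step_power_le[of d B j t i] by (simp add: fixpoint)
  have "(\<lambda>t. B * survival j t i) \<longlonglongrightarrow> B * 0"
    by (intro tendsto_mult tendsto_const summable_LIMSEQ_zero summable_survival)
  then have "\<bar>d i\<bar> \<le> 0"
    using le by (intro LIMSEQ_le_const[of "\<lambda>t. B * survival j t i"]) auto
  then show ?thesis by simp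
qed

lemma hitting_time_unique:
  assumes "h j = 0" and "\<And>i. i \<noteq> j \<Longrightarrow> h i = 1 + (\<Sum>l\<in>UNIV. P$i$l * h l)"
  shows "hitting_time P i j = h i"
proof -
  have "hitting_time P i j - h i = 0"
  proof (rule harmonic_off_target_eq_0[of "\<lambda>i. hitting_time P i j - h i" j])
    show "hitting_time P j j - h j = 0" using assms(1) hitting_time_target by simp
    show "hitting_time P i j - h i = (\<Sum>l\<in>UNIV. P$i$l * (hitting_time P l j - h l))" if "i \<noteq> j" for i
      using hitting_time_step[OF that] assms(2)[OF that] by (simp add: algebra_simps sum_subtractf)
  qed
  then show ?thesis by simp
qed

end

section \<open>The Laplacian of a connected weighted graph\<close>

definition weighted_degree :: "real^'n^'n \<Rightarrow> 'n \<Rightarrow> real" where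
  "weighted_degree Phi i = (\<Sum>l\<in>UNIV. Phi$i$l)"

definition averaging_matrix :: "real^'n^'n" where
  "averaging_matrix = (\<chi> a b. 1 / real CARD('n))"

lemma averaging_matrix_mult_vec:
  "((averaging_matrix :: real^'n^'n) *v x) $ i = (\<Sum>l\<in>UNIV. x$l) / real CARD('n)"
  by (simp add: averaging_matrix_def matrix_vector_mult_def sum_divide_distrib)

lemma averaging_matrix_idem: "averaging_matrix ** averaging_matrix = averaging_matrix"
  by (simp add: averaging_matrix_def matrix_matrix_mult_def vec_eq_iff power2_eq_square)

lemma transpose_averaging_matrix: "transpose averaging_matrix = averaging_matrix"
  by (simp add: averaging_matrix_def transpose_def vec_eq_iff)

locale connected_weighted_graph =
  fixes Phi :: "real^'n^'n"
  assumes weighted: "weighted_graph Phi" and connected: "connected_graph Phi"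
    and nontrivial: "\<exists>a b::'n. a \<noteq> b"
begin

lemma symmetric: "Phi$a$b = Phi$b$a"
  using weighted unfolding weighted_graph_def transpose_def vec_eq_iff by auto

lemma nonneg: "Phi$a$b \<ge> 0"
  using weighted unfolding weighted_graph_def by auto

lemma weighted_degree_pos: "weighted_degree Phi i > 0"
proof -
  obtain k where "k \<noteq> i" using nontrivial by metis
  have "(i, k) \<in> {(a, b). Phi$a$b > 0}\<^sup>*"
    using connected unfolding connected_graph_def by blast
  then obtain l where "Phi$i$l > 0"
    using \<open>k \<noteq> i\<close> by (cases rule: converse_rtranclE) auto
  moreover have "Phi$i$l \<le> weighted_degree Phi i"
    unfolding weighted_degree_def by (rule member_le_sum) (auto simp: nonneg)
  ultimately show ?thesis by linarith
qed

lemma laplacian_nth: "laplacian Phi $ a $ b = (if a = b then weighted_degree Phi a else 0) - Phi$a$b"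
  by (simp add: laplacian_def degree_matrix_def weighted_degree_def)

lemma laplacian_mult_vec_nth: "(laplacian Phi *v y) $ u = (\<Sum>w\<in>UNIV. Phi$u$w * (y$u - y$w))"
  by (simp add: matrix_vector_mult_def laplacian_nth weighted_degree_def left_diff_distrib
      right_diff_distrib sum_subtractf sum_distrib_right if_distrib[of "\<lambda>x. x * _"] cong: if_cong)

lemma transpose_laplacian: "transpose (laplacian Phi) = laplacian Phi"
  by (simp add: vec_eq_iff transpose_def laplacian_nth symmetric)

lemma vol_eq_sum: "vol Phi = (\<Sum>i\<in>UNIV. weighted_degree Phi i)"
  by (simp add: vol_def trace_def degree_matrix_def weighted_degree_def)

lemma vol_pos: "vol Phi > 0"
  unfolding vol_eq_sum by (rule sum_pos) (auto simp: weighted_degree_pos)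

lemma transition_matrix_nth: "transition_matrix Phi $ i $ l = Phi$i$l / weighted_degree Phi i"
proof -
  define Dinv :: "real^'n^'n" where "Dinv = (\<chi> i l. if i = l then 1 / weighted_degree Phi i else 0)"
  have "degree_matrix Phi ** Dinv = mat 1"
    using weighted_degree_pos[THEN less_imp_neq]
    by (simp add: vec_eq_iff degree_matrix_def Dinv_def matrix_matrix_mult_def mat_def
        weighted_degree_def[symmetric] if_distrib[of "\<lambda>x. x * _"] cong: if_cong)
  then have "matrix_inv (degree_matrix Phi) = Dinv" by (rule matrix_inv_eqI)
  then show ?thesis
    by (simp add: transition_matrix_def Dinv_def matrix_matrix_mult_def
        if_distrib[of "\<lambda>x. x * _"] cong: if_cong)
qed

lemma transition_matrix_pos_iff: "transition_matrix Phi $ i $ l > 0 \<longleftrightarrow> Phi$i$l > 0"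
  using weighted_degree_pos[of i] by (auto simp: transition_matrix_nth zero_less_divide_iff)

sublocale random_walk: irreducible_chain "transition_matrix Phi"
proof
  show "transition_matrix Phi $ i $ l \<ge> 0" for i l
    by (simp add: transition_matrix_nth nonneg weighted_degree_pos less_imp_le)
  show "(\<Sum>l\<in>UNIV. transition_matrix Phi $ i $ l) = 1" for i
    using weighted_degree_pos[of i]
    by (simp add: transition_matrix_nth weighted_degree_def[symmetric] flip: sum_divide_distrib)
  show "(i, j) \<in> {(a, b). transition_matrix Phi $ a $ b > 0}\<^sup>*" for i j
    using connected unfolding connected_graph_def by (simp add: transition_matrix_pos_iff)
qed

lemma laplacian_mult_vec_nth_transition:
  "(laplacian Phi *v x) $ i =
    weighted_degree Phi i * (x$i - (\<Sum>l\<in>UNIV. transition_matrix Phi $ i $ l * x$l))"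
proof -
  have "(\<Sum>l\<in>UNIV. transition_matrix Phi $ i $ l * x$l)
      = (\<Sum>l\<in>UNIV. Phi$i$l * x$l) / weighted_degree Phi i"
    by (simp add: transition_matrix_nth sum_divide_distrib)
  moreover have "(laplacian Phi *v x) $ i = weighted_degree Phi i * x$i - (\<Sum>l\<in>UNIV. Phi$i$l * x$l)"
    by (simp add: laplacian_mult_vec_nth right_diff_distrib sum_subtractf weighted_degree_def
        sum_distrib_right)
  ultimately show ?thesis
    using weighted_degree_pos[of i] by (simp add: right_diff_distrib)
qed

lemma laplacian_kernel_const:
  assumes "laplacian Phi *v x = 0"
  shows "x$a = x$b"
proof -
  have harmonic: "x$i = (\<Sum>l\<in>UNIV. transition_matrix Phi $ i $ l * x$l)" for i
    using arg_cong[OF assms, of "\<lambda>v. v $ i"] weighted_degree_pos[of i]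
    by (simp add: laplacian_mult_vec_nth_transition)
  have "x$a - x$b = 0"
  proof (rule random_walk.harmonic_off_target_eq_0[of "\<lambda>i. x$i - x$b" b])
    show "x$i - x$b = (\<Sum>l\<in>UNIV. transition_matrix Phi $ i $ l * (x$l - x$b))" for i
      using harmonic[of i] by (simp add: right_diff_distrib sum_subtractf random_walk.row_sum
          flip: sum_distrib_right)
  qed simp
  then show ?thesis by simp
qed

lemma laplacian_mult_averaging_matrix: "laplacian Phi ** averaging_matrix = 0"
  by (simp add: vec_eq_iff matrix_matrix_mult_def averaging_matrix_def laplacian_nth
      weighted_degree_def sum_subtractf flip: sum_divide_distrib)

lemma averaging_matrix_mult_laplacian: "averaging_matrix ** laplacian Phi = 0"
proof -
  have "averaging_matrix ** laplacian Phi = transpose (laplacian Phi ** averaging_matrix)"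
    by (simp add: matrix_transpose_mul transpose_laplacian transpose_averaging_matrix)
  then show ?thesis
    by (simp add: laplacian_mult_averaging_matrix transpose_def vec_eq_iff)
qed

lemma invertible_laplacian_add_averaging: "invertible (laplacian Phi + averaging_matrix)"
  unfolding invertible_left_inverse matrix_left_invertible_ker
proof (intro allI impI)
  fix x assume x: "(laplacian Phi + averaging_matrix) *v x = 0"
  have "averaging_matrix *v x = averaging_matrix *v ((laplacian Phi + averaging_matrix) *v x)"
    by (simp add: matrix_vector_mul_assoc matrix_add_ldistrib averaging_matrix_mult_laplacian
        averaging_matrix_idem)
  then have Jx: "averaging_matrix *v x = 0" using x by simp
  then have "laplacian Phi *v x = 0" using x by (simp add: matrix_vector_mult_add_rdistrib)
  then have const: "x$l = x$a" for l a by (rule laplacian_kernel_const)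
  have "(\<Sum>l\<in>UNIV. x$l) = 0"
    using arg_cong[OF Jx, of "\<lambda>v. v $ undefined"] by (simp add: averaging_matrix_mult_vec)
  moreover have "(\<Sum>l\<in>UNIV. x$l) = (\<Sum>l::'n\<in>UNIV. x$a)" for a
    by (rule sum.cong[OF refl]) (rule const)
  ultimately show "x = 0" by (simp add: vec_eq_iff)
qed

lemma is_pinv_laplacian:
  "is_pinv (laplacian Phi) (matrix_inv (laplacian Phi + averaging_matrix) - averaging_matrix)"
  and laplacian_mult_pinv: "laplacian Phi ** pinv (laplacian Phi) = mat 1 - averaging_matrix"
  and averaging_matrix_mult_pinv_laplacian: "averaging_matrix ** pinv (laplacian Phi) = 0"
  using is_pinv_matrix_inv_add_projection[OF averaging_matrix_idem transpose_averaging_matrix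
      laplacian_mult_averaging_matrix averaging_matrix_mult_laplacian invertible_laplacian_add_averaging]
  by (simp_all add: pinv_eqI)

lemma transpose_pinv_laplacian: "transpose (pinv (laplacian Phi)) = pinv (laplacian Phi)"
  using is_pinv_symmetric[OF is_pinv_laplacian transpose_laplacian]
  by (simp add: pinv_eqI[OF is_pinv_laplacian])

end

section \<open>Incidence matrices\<close>

lemma edge_orientation_exists:
  fixes Phi :: "real^'n^'n"
  assumes "weighted_graph Phi" and card_edges: "CARD('e) = card {{j, k} | j k. Phi$j$k > 0}"
  obtains \<epsilon> :: "'e::finite \<Rightarrow> 'n \<times> 'n" where "edge_orientation Phi \<epsilon>"
proof -
  define R where "R = {(a, b). Phi$a$b > 0 \<and> to_nat a < to_nat b}"
  have sym: "Phi$a$b = Phi$b$a" for a b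
    using assms(1) unfolding weighted_graph_def transpose_def vec_eq_iff by auto
  have oriented: "(a, b) \<in> R \<or> (b, a) \<in> R" if "Phi$a$b > 0" for a b
  proof -
    have "a \<noteq> b" using that assms(1) unfolding weighted_graph_def by auto
    then have "to_nat a < to_nat b \<or> to_nat b < to_nat a"
      by (metis inj_to_nat injD linorder_neqE_nat)
    then show ?thesis using that sym[of a b] unfolding R_def by auto
  qed
  have "inj_on (\<lambda>(a, b). {a, b}) R"
    unfolding inj_on_def R_def by (auto simp: doubleton_eq_iff)
  moreover have "(\<lambda>(a, b). {a, b}) ` R = {{j, k} | j k. Phi$j$k > 0}"
  proof (intro equalityI subsetI)
    fix x assume "x \<in> (\<lambda>(a, b). {a, b}) ` R"
    then show "x \<in> {{j, k} | j k. Phi$j$k > 0}" unfolding R_def by auto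
  next
    fix x assume "x \<in> {{j, k} | j k. Phi$j$k > 0}"
    then obtain j k where "x = {j, k}" "Phi$j$k > 0" by blast
    then show "x \<in> (\<lambda>(a, b). {a, b}) ` R"
      using oriented[of j k] insert_commute[of j k "{}"]
      by (metis (no_types, lifting) case_prod_conv image_eqI)
  qed
  ultimately have "bij_betw (\<lambda>(a, b). {a, b}) R {{j, k} | j k. Phi$j$k > 0}"
    unfolding bij_betw_def by blast
  then have "card (UNIV :: 'e set) = card R"
    using card_edges by (simp add: bij_betw_same_card)
  then obtain \<epsilon> :: "'e \<Rightarrow> 'n \<times> 'n" where \<epsilon>: "bij_betw \<epsilon> UNIV R"
    using finite_same_card_bij[of "UNIV :: 'e set" R] by auto
  then have "inj \<epsilon>" and range_eq: "range \<epsilon> = R"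
    by (simp_all add: bij_betw_def)
  moreover have "Phi $ fst (\<epsilon> e) $ snd (\<epsilon> e) > 0" for e
    using rangeI[of \<epsilon> e] unfolding range_eq R_def by (cases "\<epsilon> e") simp
  moreover have "(k, j) \<notin> range \<epsilon>" if "(j, k) \<in> range \<epsilon>" for j k
    using that unfolding range_eq R_def by simp
  ultimately have "edge_orientation Phi \<epsilon>"
    using oriented unfolding edge_orientation_def range_eq by blast
  then show ?thesis by (rule that)
qed

context connected_weighted_graph
begin

lemma column_incidence_matrix:
  assumes "edge_orientation Phi \<epsilon>" and "\<epsilon> e = (u, w)"
  shows "column e (incidence_matrix Phi \<epsilon>) = sqrt (Phi$u$w) *\<^sub>R (axis u 1 - axis w 1)"
proof -
  have "Phi$u$w > 0" using assms unfolding edge_orientation_def by (metis fst_conv snd_conv)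
  then have "u \<noteq> w" using weighted unfolding weighted_graph_def by auto
  then show ?thesis
    using assms(2) by (auto simp: vec_eq_iff column_def incidence_matrix_def axis_def)
qed

text \<open>Each edge appears in exactly one orientation, so the sum over oriented edges is half
  the sum over all ordered pairs.\<close>
lemma sum_edge_orientation:
  fixes \<epsilon> :: "'e::finite \<Rightarrow> 'n \<times> 'n" and h :: "'n \<times> 'n \<Rightarrow> real"
  assumes \<epsilon>: "edge_orientation Phi \<epsilon>"
    and sym_h: "\<And>u w. h (u, w) = h (w, u)" and supp_h: "\<And>u w. Phi$u$w = 0 \<Longrightarrow> h (u, w) = 0"
  shows "2 * (\<Sum>e\<in>UNIV. h (\<epsilon> e)) = (\<Sum>x\<in>UNIV. h x)"
proof -
  let ?S = "range \<epsilon>" and ?S' = "prod.swap ` range \<epsilon>"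
  have "inj \<epsilon>" using \<epsilon> unfolding edge_orientation_def by blast
  then have sum_S: "(\<Sum>e\<in>UNIV. h (\<epsilon> e)) = sum h ?S"
    by (simp add: sum.reindex)
  have "sum h ?S = sum (h \<circ> prod.swap) ?S"
    using sym_h by (intro sum.cong) (auto simp: prod.swap_def)
  then have sum_S': "sum h ?S' = sum h ?S"
    by (simp add: sum.reindex)
  have pos: "Phi$u$w > 0" if "(u, w) \<in> ?S" for u w
    using that \<epsilon> unfolding edge_orientation_def by (metis fst_conv rangeE snd_conv)
  have mem_S': "(u, w) \<in> ?S' \<longleftrightarrow> (w, u) \<in> ?S" for u w
    by (metis image_iff swap_swap swap_simp)
  have "?S \<inter> ?S' = {}"
    using \<epsilon> unfolding edge_orientation_def by (simp add: disjoint_iff split_paired_All mem_S')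
  moreover have "?S \<union> ?S' = {(u, w). Phi$u$w > 0}"
    using \<epsilon> pos symmetric unfolding edge_orientation_def
    by (simp add: set_eq_iff split_paired_All mem_S') metis
  ultimately have "2 * (\<Sum>e\<in>UNIV. h (\<epsilon> e)) = sum h {(u, w). Phi$u$w > 0}"
    using sum.union_disjoint[of ?S ?S' h] sum_S sum_S' by simp
  also have "\<dots> = (\<Sum>x\<in>UNIV. h x)"
    by (rule sum.mono_neutral_left)
      (use supp_h nonneg in \<open>auto simp: not_less order.order_iff_strict\<close>)
  finally show ?thesis .
qed

lemma laplacian_bilinear:
  "(\<Sum>u\<in>UNIV. \<Sum>w\<in>UNIV. Phi$u$w * (x$u - x$w) * (y$u - y$w)) = 2 * (x \<bullet> (laplacian Phi *v y))"
proof -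
  have "(\<Sum>u\<in>UNIV. \<Sum>w\<in>UNIV. Phi$u$w * x$w * (y$u - y$w))
      = (\<Sum>w\<in>UNIV. \<Sum>u\<in>UNIV. Phi$w$u * x$w * (y$u - y$w))"
    by (subst sum.swap) (simp add: symmetric)
  also have "\<dots> = - (\<Sum>u\<in>UNIV. \<Sum>w\<in>UNIV. Phi$u$w * x$u * (y$u - y$w))"
    by (simp add: algebra_simps sum_subtractf flip: sum_negf)
  finally have swap: "(\<Sum>u\<in>UNIV. \<Sum>w\<in>UNIV. Phi$u$w * x$w * (y$u - y$w))
      = - (\<Sum>u\<in>UNIV. \<Sum>w\<in>UNIV. Phi$u$w * x$u * (y$u - y$w))" .
  have "(\<Sum>u\<in>UNIV. \<Sum>w\<in>UNIV. Phi$u$w * (x$u - x$w) * (y$u - y$w))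
      = (\<Sum>u\<in>UNIV. \<Sum>w\<in>UNIV. Phi$u$w * x$u * (y$u - y$w))
        - (\<Sum>u\<in>UNIV. \<Sum>w\<in>UNIV. Phi$u$w * x$w * (y$u - y$w))"
    by (simp add: left_diff_distrib right_diff_distrib sum_subtractf)
  also have "\<dots> = 2 * (\<Sum>u\<in>UNIV. x$u * (\<Sum>w\<in>UNIV. Phi$u$w * (y$u - y$w)))"
    unfolding swap by (simp add: sum_distrib_left mult_ac)
  finally show ?thesis by (simp add: inner_vec_def laplacian_mult_vec_nth)
qed

lemma incidence_matrix_mult_transpose:
  fixes \<epsilon> :: "'e::finite \<Rightarrow> 'n \<times> 'n"
  assumes \<epsilon>: "edge_orientation Phi \<epsilon>"
  shows "incidence_matrix Phi \<epsilon> ** transpose (incidence_matrix Phi \<epsilon>) = laplacian Phi"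
proof -
  let ?F = "incidence_matrix Phi \<epsilon>"
  have "(?F ** transpose ?F) $ a $ b = laplacian Phi $ a $ b" for a b
  proof -
    define h where
      "h = (\<lambda>(u, w). Phi$u$w * (axis a 1 $ u - axis a 1 $ w) * (axis b 1 $ u - axis b 1 $ w))"
    have "?F $ a $ e * ?F $ b $ e = h (\<epsilon> e)" for e
    proof -
      obtain u w where uw: "\<epsilon> e = (u, w)" by fastforce
      have "?F $ a $ e * ?F $ b $ e = column e ?F $ a * column e ?F $ b"
        by (simp add: column_def)
      also have "\<dots> = h (\<epsilon> e)"
        by (simp add: column_incidence_matrix[OF \<epsilon> uw] uw h_def axis_def
            abs_of_nonneg[OF nonneg])
      finally show ?thesis .
    qed
    then have "2 * (?F ** transpose ?F) $ a $ b = 2 * (\<Sum>e\<in>UNIV. h (\<epsilon> e))"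
      by (simp add: matrix_matrix_mult_def transpose_def)
    also have "\<dots> = (\<Sum>x\<in>UNIV. h x)"
      by (rule sum_edge_orientation[OF \<epsilon>]) (auto simp: h_def symmetric algebra_simps)
    also have "\<dots> = 2 * (axis a 1 \<bullet> (laplacian Phi *v axis b 1))"
      by (simp add: h_def laplacian_bilinear flip: UNIV_Times_UNIV sum.cartesian_product)
    finally show ?thesis by (simp add: inner_axis' matrix_vector_mult_basis column_def)
  qed
  then show ?thesis by (simp add: vec_eq_iff)
qed

lemma pinv_incidence_matrix_row:
  assumes \<epsilon>: "edge_orientation Phi (\<epsilon> :: 'e::finite \<Rightarrow> 'n \<times> 'n)" and "\<epsilon> e = (j, k)"
  shows "pinv (incidence_matrix Phi \<epsilon>) $ e
    = sqrt (Phi$j$k) *\<^sub>R (column j (pinv (laplacian Phi)) - column k (pinv (laplacian Phi)))"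
proof -
  let ?F = "incidence_matrix Phi \<epsilon>"
  have "is_pinv (?F ** transpose ?F) (pinv (laplacian Phi))"
    by (simp add: incidence_matrix_mult_transpose[OF \<epsilon>] pinv_eqI[OF is_pinv_laplacian]
        is_pinv_laplacian)
  then have "pinv ?F = transpose ?F ** pinv (laplacian Phi)"
    by (intro pinv_eqI is_pinv_factor)
  then show ?thesis
    by (simp add: transpose_mult_nth transpose_pinv_laplacian column_incidence_matrix[OF assms]
        matrix_vector_mult_scaleR matrix_vector_mult_diff_distrib matrix_vector_mult_basis)
qed

end

section \<open>Hitting and commute times\<close>

context connected_weighted_graph
begin

text \<open>The potential h = L^+ (d - vol e_j) solves L h = d - vol e_j, i.e. the first-step
  equations of the hitting time of j, so hitting times are differences of its entries.\<close>
lemma hitting_time_eq: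
  defines "G \<equiv> pinv (laplacian Phi)" and "d \<equiv> (\<chi> l. weighted_degree Phi l)"
  shows "hitting_time (transition_matrix Phi) i j
    = (G *v d)$i - (G *v d)$j - vol Phi * (G$i$j - G$j$j)"
proof -
  define h where "h = G *v (d - vol Phi *\<^sub>R axis j 1)"
  have "(\<Sum>l\<in>UNIV. (d - vol Phi *\<^sub>R axis j 1) $ l) = 0"
    by (simp add: d_def vol_eq_sum sum_subtractf axis_def if_distrib[of "\<lambda>x. _ * x"]
        cong: if_cong)
  then have Lh: "laplacian Phi *v h = d - vol Phi *\<^sub>R axis j 1"
    by (simp add: h_def G_def matrix_vector_mul_assoc laplacian_mult_pinv
        matrix_vector_mult_diff_rdistrib vec_eq_iff averaging_matrix_mult_vec)
  have "hitting_time (transition_matrix Phi) i j = h$i - h$j"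
  proof (rule random_walk.hitting_time_unique)
    fix i assume "i \<noteq> j"
    then have "weighted_degree Phi i * (h$i - (\<Sum>l\<in>UNIV. transition_matrix Phi $ i $ l * h$l))
        = weighted_degree Phi i * 1"
      by (simp add: Lh d_def axis_def flip: laplacian_mult_vec_nth_transition)
    then have "h$i = 1 + (\<Sum>l\<in>UNIV. transition_matrix Phi $ i $ l * h$l)"
      using weighted_degree_pos[of i] by simp
    then show "h$i - h$j = 1 + (\<Sum>l\<in>UNIV. transition_matrix Phi $ i $ l * (h$l - h$j))"
      by (simp add: right_diff_distrib sum_subtractf random_walk.row_sum flip: sum_distrib_right)
  qed simp
  then show ?thesis
    by (simp add: h_def matrix_vector_mult_diff_distrib matrix_vector_mult_scaleR
        matrix_vector_mult_basis column_def algebra_simps)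
qed

lemma commute_time_nth:
  "commute_time_matrix Phi $ i $ j = vol Phi *
    (pinv (laplacian Phi) $ i $ i + pinv (laplacian Phi) $ j $ j - 2 * pinv (laplacian Phi) $ i $ j)"
proof -
  have "pinv (laplacian Phi) $ j $ i = pinv (laplacian Phi) $ i $ j"
    using arg_cong[OF transpose_pinv_laplacian, of "\<lambda>M. M $ i $ j"] by (simp add: transpose_def)
  then show ?thesis
    by (simp add: commute_time_matrix_def hitting_time_eq algebra_simps)
qed

lemma centered_commute_time_column_diff:
  "(mat 1 - averaging_matrix) *v
      (column k (commute_time_matrix Phi) - column j (commute_time_matrix Phi))
    = (2 * vol Phi) *\<^sub>R (column j (pinv (laplacian Phi)) - column k (pinv (laplacian Phi)))"
proof -
  let ?G = "pinv (laplacian Phi)" and ?J = "mat 1 - averaging_matrix"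
  let ?v = "(2 * vol Phi) *\<^sub>R (axis j 1 - axis k 1)"
  have "column k (commute_time_matrix Phi) - column j (commute_time_matrix Phi)
      = vec (vol Phi * (?G$k$k - ?G$j$j)) + ?G *v ?v"
    by (simp add: vec_eq_iff column_def commute_time_nth matrix_vector_mult_scaleR
        matrix_vector_mult_diff_distrib matrix_vector_mult_basis algebra_simps)
  moreover have "?J *v vec c = 0" for c :: real
    by (simp add: vec_eq_iff matrix_vector_mult_diff_rdistrib averaging_matrix_mult_vec)
  moreover have "?J *v (?G *v ?v) = ?G *v ?v"
    by (simp add: matrix_vector_mul_assoc matrix_sub_rdistrib averaging_matrix_mult_pinv_laplacian)
  ultimately have "?J *v (column k (commute_time_matrix Phi) - column j (commute_time_matrix Phi))
      = ?G *v ?v"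
    by (simp only: matrix_vector_right_distrib) simp
  then show ?thesis
    by (simp add: matrix_vector_mult_scaleR matrix_vector_mult_diff_distrib matrix_vector_mult_basis)
qed

end

theorem lemma3p1:
  fixes Phi :: "real^'n^'n"
  assumes "weighted_graph Phi"
    and "connected_graph Phi"
    and "CARD('e::finite) = card {{j, k} | j k. Phi$j$k > 0}"
  shows "\<exists>(\<epsilon> :: 'e \<Rightarrow> 'n \<times> 'n) F. edge_orientation Phi \<epsilon> \<and> F = incidence_matrix Phi \<epsilon> \<and>
    (\<forall>e j k. \<epsilon> e = (j, k) \<longrightarrow>
       (pinv F) $ e = sqrt (Phi$j$k) *\<^sub>R (column j (pinv (laplacian Phi)) - column k (pinv (laplacian Phi)))
     \<and> sqrt (Phi$j$k) *\<^sub>R (column j (pinv (laplacian Phi)) - column k (pinv (laplacian Phi)))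
       = (sqrt (Phi$j$k) / (2 * vol Phi)) *\<^sub>R
           ((mat 1 - (\<chi> a b. 1 / real CARD('n))) *v
              (column k (commute_time_matrix Phi) - column j (commute_time_matrix Phi))))"
proof -
  obtain \<epsilon> :: "'e \<Rightarrow> 'n \<times> 'n" where \<epsilon>: "edge_orientation Phi \<epsilon>"
    using edge_orientation_exists[OF assms(1,3)] by blast
  have "Phi $ fst (\<epsilon> undefined) $ snd (\<epsilon> undefined) > 0"
    using \<epsilon> unfolding edge_orientation_def by blast
  then have "fst (\<epsilon> undefined) \<noteq> snd (\<epsilon> undefined)"
    using assms(1) unfolding weighted_graph_def by auto
  then interpret connected_weighted_graph Phi
    by (intro connected_weighted_graph.intro assms(1,2)) blast
  show ?thesis
  proof (intro exI conjI allI impI)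
    show "edge_orientation Phi \<epsilon>" by (rule \<epsilon>)
    show "incidence_matrix Phi \<epsilon> = incidence_matrix Phi \<epsilon>" ..
  next
    fix e j k assume "\<epsilon> e = (j, k)"
    then show "pinv (incidence_matrix Phi \<epsilon>) $ e
        = sqrt (Phi$j$k) *\<^sub>R (column j (pinv (laplacian Phi)) - column k (pinv (laplacian Phi)))"
      by (rule pinv_incidence_matrix_row[OF \<epsilon>])
    show "sqrt (Phi$j$k) *\<^sub>R (column j (pinv (laplacian Phi)) - column k (pinv (laplacian Phi)))
        = (sqrt (Phi$j$k) / (2 * vol Phi)) *\<^sub>R ((mat 1 - (\<chi> a b. 1 / real CARD('n))) *v
            (column k (commute_time_matrix Phi) - column j (commute_time_matrix Phi)))"
      using vol_pos by (simp add: centered_commute_time_column_diff flip: averaging_matrix_def)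
  qed
qed

end
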